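(* Let $(X,d)$ be a $\delta$-Gromov hyperbolic space, $p\in X$, $\epsilon>0$, and $X^\epsilon=(X,d_\epsilon)$ the uniformized space. If the Gehring-Hayman property for metric boundary points holds for $X^\epsilon$, then the Gehring-Hayman property for Gromov sequences holds for $X^\epsilon$.
   Context: Gromov product $(x|y)_p=\frac12(d(p,x)+d(p,y)-d(x,y))$. $\delta$-Gromov hyperbolic: unbounded, proper, geodesic, and $(x|z)_p\ge\min\{(x|y)_p,(y|z)_p\}-\delta$ for all $x,y,z,p$. Uniformized metric: $d_\epsilon(x,y)=\inf_\gamma\int_\gamma e^{-\epsilon d(p,z)}ds(z)$ over $d$-rectifiable curves from $x$ to $y$; $l_{d_\epsilon}$ is length with respect to $d_\epsilon$; $\partial_{d_\epsilon}X^\epsilon=\overline{X^\epsilon}\setminus X^\epsilon$ (closure in the completion); $[x,y]$ denotes a $d$-geodesic. A Gromov sequence is $(x_n)$ with $(x_n|x_m)_p\to\infty$ as $n,m\to\infty$. GH property for Gromov sequences: for each Gromov sequence $(x_n)$ there is $C\ge1$ with $l_{d_\epsilon}([x_n,x_m])\le Cd_\epsilon(x_n,x_m)$ for all $n,m$. GH property for metric boundary points: for every $x\in\partial_{d_\epsilon}X^\epsilon$ and every $(x_n)\subseteq X$ with $d_\epsilon(x_n,x)\to0$ there is $C\ge1$ with $l_{d_\epsilon}([x_n,x_m])\le Cd_\epsilon(x_n,x_m)$ for all $n,m$. *)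

theory Defs
  imports "HOL-Analysis.Analysis"
begin

text \<open>The space X is the whole carrier of a type of class metric_space, with d = dist.\<close>

definition gromov_product :: "'a::metric_space \<Rightarrow> 'a \<Rightarrow> 'a \<Rightarrow> real" where
  "gromov_product p x y = (dist p x + dist p y - dist x y) / 2"

definition is_geodesic :: "(real \<Rightarrow> 'a::metric_space) \<Rightarrow> 'a \<Rightarrow> 'a \<Rightarrow> bool" where
  "is_geodesic g x y \<longleftrightarrow> g 0 = x \<and> g (dist x y) = y \<and>
     (\<forall>s\<in>{0..dist x y}. \<forall>t\<in>{0..dist x y}. dist (g s) (g t) = \<bar>s - t\<bar>)"

definition geodesic_space :: "'a::metric_space itself \<Rightarrow> bool" where
  "geodesic_space _ \<longleftrightarrow> (\<forall>x y::'a. \<exists>g. is_geodesic g x y)"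

definition proper_space :: "'a::metric_space itself \<Rightarrow> bool" where
  "proper_space _ \<longleftrightarrow> (\<forall>(x::'a) r. compact (cball x r))"

definition gromov_hyperbolic :: "'a::metric_space itself \<Rightarrow> real \<Rightarrow> bool" where
  "gromov_hyperbolic T \<delta> \<longleftrightarrow>
     \<not> bounded (UNIV :: 'a set) \<and> proper_space T \<and> geodesic_space T \<and>
     (\<forall>x y z p :: 'a. gromov_product p x z \<ge>
         min (gromov_product p x y) (gromov_product p y z) - \<delta>)"

definition curve_length_on ::
    "('a \<Rightarrow> 'a \<Rightarrow> real) \<Rightarrow> (real \<Rightarrow> 'a) \<Rightarrow> real \<Rightarrow> real \<Rightarrow> ereal" where
  "curve_length_on D g a b =
     (SUP ts \<in> {ts. sorted ts \<and> set ts \<subseteq> {a..b}}.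
        ereal (sum_list (map (\<lambda>(s, t). D (g s) (g t)) (zip ts (tl ts)))))"

definition rectifiable :: "(real \<Rightarrow> 'a::metric_space) \<Rightarrow> bool" where
  "rectifiable g \<longleftrightarrow> path g \<and> curve_length_on dist g 0 1 < \<infinity>"

definition arclength_fun :: "(real \<Rightarrow> 'a::metric_space) \<Rightarrow> real \<Rightarrow> real" where
  "arclength_fun g t = real_of_ereal (curve_length_on dist g 0 (min 1 t))"

definition line_integral :: "('a::metric_space \<Rightarrow> real) \<Rightarrow> (real \<Rightarrow> 'a) \<Rightarrow> real" where
  "line_integral \<rho> g = (LINT t:{0..1}|interval_measure (arclength_fun g). \<rho> (g t))"

definition uniformized :: "real \<Rightarrow> 'a::metric_space \<Rightarrow> 'a \<Rightarrow> 'a \<Rightarrow> real" where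
  "uniformized \<epsilon> p x y =
     (INF g \<in> {g. rectifiable g \<and> pathstart g = x \<and> pathfinish g = y}.
        line_integral (\<lambda>z. exp (- \<epsilon> * dist p z)) g)"

definition gromov_sequence :: "'a::metric_space \<Rightarrow> (nat \<Rightarrow> 'a) \<Rightarrow> bool" where
  "gromov_sequence p xs \<longleftrightarrow>
     (\<forall>M. \<exists>N. \<forall>n\<ge>N. \<forall>m\<ge>N. gromov_product p (xs n) (xs m) \<ge> M)"

definition GH_bound :: "real \<Rightarrow> 'a::metric_space \<Rightarrow> (nat \<Rightarrow> 'a) \<Rightarrow> real \<Rightarrow> bool" where
  "GH_bound \<epsilon> p xs C \<longleftrightarrow>
     (\<forall>n m g. is_geodesic g (xs n) (xs m) \<longrightarrow>
        curve_length_on (uniformized \<epsilon> p) g 0 (dist (xs n) (xs m))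
          \<le> ereal (C * uniformized \<epsilon> p (xs n) (xs m)))"

definition GH_gromov_sequences :: "real \<Rightarrow> 'a::metric_space \<Rightarrow> bool" where
  "GH_gromov_sequences \<epsilon> p \<longleftrightarrow>
     (\<forall>xs. gromov_sequence p xs \<longrightarrow> (\<exists>C\<ge>1. GH_bound \<epsilon> p xs C))"

text \<open>Sequences in X converging in the completion of (X,d_eps) to a point of the metric
  boundary are exactly the d_eps-Cauchy sequences with no d_eps-limit in X.\<close>
definition converges_to_metric_boundary :: "real \<Rightarrow> 'a::metric_space \<Rightarrow> (nat \<Rightarrow> 'a) \<Rightarrow> bool" where
  "converges_to_metric_boundary \<epsilon> p xs \<longleftrightarrow>
     (\<forall>e>0. \<exists>N. \<forall>n\<ge>N. \<forall>m\<ge>N. uniformized \<epsilon> p (xs n) (xs m) < e) \<and>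
     \<not> (\<exists>x. (\<lambda>n. uniformized \<epsilon> p (xs n) x) \<longlonglongrightarrow> 0)"

definition GH_metric_boundary :: "real \<Rightarrow> 'a::metric_space \<Rightarrow> bool" where
  "GH_metric_boundary \<epsilon> p \<longleftrightarrow>
     (\<forall>xs. converges_to_metric_boundary \<epsilon> p xs \<longrightarrow> (\<exists>C\<ge>1. GH_bound \<epsilon> p xs C))"

end

theory Submission
  imports Defs
begin

(* A Gromov sequence (x_n) converges in the completion of (X, d_eps) to a point of the metric
   boundary, so the hypothesis applies to it.  Along a geodesic [x,y] parametrised by arc length s
   one has d(p, gamma s) >= (x|y)_p + |s - c| for a suitable c, and integrating the weight
   exp (-eps d(p,.)) gives d_eps(x,y) <= (pi / eps) exp (-eps (x|y)_p); hence (x_n) is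
   d_eps-Cauchy.  Conversely, after its last exit from the ball B(x,1) a curve from u to x with
   d(u,x) >= 1 still has d-length at least 1, on which the weight is at least
   exp (-eps (d(p,x) + 1)); since d(p,x_n) tends to infinity, no point of X is a d_eps-limit of
   (x_n). *)

section \<open>Chain sums and the length of curves\<close>

fun chain_sum :: "('b \<Rightarrow> 'b \<Rightarrow> real) \<Rightarrow> 'b list \<Rightarrow> real" where
  "chain_sum E [] = 0"
| "chain_sum E [x] = 0"
| "chain_sum E (x # y # zs) = E x y + chain_sum E (y # zs)"

lemma sum_list_zip_tl_eq_chain_sum:
  "sum_list (map (\<lambda>(s, t). E s t) (zip ts (tl ts))) = chain_sum E ts"
  by (induction E ts rule: chain_sum.induct) auto

lemma chain_sum_append:
  "chain_sum E (xs @ y # ys) = chain_sum E (xs @ [y]) + chain_sum E (y # ys)"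
  by (induction E xs rule: chain_sum.induct) auto

lemma chain_sum_snoc:
  "xs \<noteq> [] \<Longrightarrow> chain_sum E (xs @ [y]) = chain_sum E xs + E (last xs) y"
  by (induction E xs rule: chain_sum.induct) auto

lemma chain_sum_le_snoc:
  "(\<And>x y. 0 \<le> E x y) \<Longrightarrow> chain_sum E xs \<le> chain_sum E (xs @ [y])"
  by (cases "xs = []") (auto simp: chain_sum_snoc)

lemma chain_sum_le_insert:
  assumes nonneg: "\<And>x y. 0 \<le> E x y" and triangle: "\<And>x y z. E x z \<le> E x y + E y z"
  shows "chain_sum E (xs @ ys) \<le> chain_sum E (xs @ [a]) + chain_sum E (a # ys)"
proof (cases ys)
  case Nil
  then show ?thesis using chain_sum_le_snoc[OF nonneg] by simp
next
  case (Cons v vs)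
  show ?thesis
  proof (cases xs rule: rev_cases)
    case Nil
    then show ?thesis using Cons nonneg[of a v] by simp
  next
    case (snoc us u)
    have "chain_sum E (xs @ ys) = chain_sum E xs + E u v + chain_sum E ys"
      using chain_sum_append[of E us u ys] snoc Cons by simp
    also have "\<dots> \<le> chain_sum E xs + E u a + (E a v + chain_sum E ys)"
      using triangle[of u v a] by simp
    also have "\<dots> = chain_sum E (xs @ [a]) + chain_sum E (a # ys)"
      using chain_sum_snoc[of xs E a] snoc Cons by simp
    finally show ?thesis .
  qed
qed

lemma curve_length_on_eq_SUP_chain_sum:
  "curve_length_on D g a b =
     (SUP ts \<in> {ts. sorted ts \<and> set ts \<subseteq> {a..b}}. ereal (chain_sum (\<lambda>s t. D (g s) (g t)) ts))"
  unfolding curve_length_on_def sum_list_zip_tl_eq_chain_sum ..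

lemma chain_sum_le_curve_length_on:
  "sorted ts \<Longrightarrow> set ts \<subseteq> {a..b} \<Longrightarrow>
     ereal (chain_sum (\<lambda>s t. D (g s) (g t)) ts) \<le> curve_length_on D g a b"
  unfolding curve_length_on_eq_SUP_chain_sum by (rule SUP_upper) auto

lemma curve_length_on_le:
  "(\<And>ts. sorted ts \<Longrightarrow> set ts \<subseteq> {a..b} \<Longrightarrow> chain_sum (\<lambda>s t. D (g s) (g t)) ts \<le> M) \<Longrightarrow>
     curve_length_on D g a b \<le> ereal M"
  unfolding curve_length_on_eq_SUP_chain_sum by (rule SUP_least) auto

lemma curve_length_on_nonneg: "0 \<le> curve_length_on D g a b"
  using chain_sum_le_curve_length_on[of "[]" a b D g] by (simp add: zero_ereal_def)

lemma curve_length_on_mono: "b \<le> b' \<Longrightarrow> curve_length_on D g a b \<le> curve_length_on D g a b'"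
  unfolding curve_length_on_eq_SUP_chain_sum by (rule SUP_subset_mono) auto

lemma curve_length_on_empty: "b < a \<Longrightarrow> curve_length_on D g a b = 0"
proof -
  assume "b < a"
  then have "{ts. sorted ts \<and> set ts \<subseteq> {a..b}} = {[]}" by auto
  then show ?thesis unfolding curve_length_on_eq_SUP_chain_sum by (simp add: zero_ereal_def)
qed

lemma curve_length_on_approx:
  assumes "curve_length_on D g a b = ereal r" and "0 < e"
  obtains ts where "sorted ts" "set ts \<subseteq> {a..b}" "r - e < chain_sum (\<lambda>s t. D (g s) (g t)) ts"
proof -
  have "ereal (r - e) < curve_length_on D g a b" using assms by simp
  then show ?thesis
    using that unfolding curve_length_on_eq_SUP_chain_sum less_SUP_iff by auto
qed

section \<open>Arc length and line integrals\<close>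

lemma ereal_arclength_fun:
  assumes "rectifiable g"
  shows "ereal (arclength_fun g t) = curve_length_on dist g 0 (min 1 t)"
proof -
  have "curve_length_on dist g 0 (min 1 t) \<le> curve_length_on dist g 0 1"
    by (rule curve_length_on_mono) simp
  also have "\<dots> < \<infinity>" using assms unfolding rectifiable_def by simp
  finally have "\<bar>curve_length_on dist g 0 (min 1 t)\<bar> \<noteq> \<infinity>"
    using curve_length_on_nonneg[of dist g 0 "min 1 t"] by auto
  then show ?thesis unfolding arclength_fun_def by (simp add: ereal_real)
qed

lemma arclength_fun_mono:
  assumes "rectifiable g" and "s \<le> t"
  shows "arclength_fun g s \<le> arclength_fun g t"
proof -
  have "ereal (arclength_fun g s) \<le> ereal (arclength_fun g t)"
    unfolding ereal_arclength_fun[OF assms(1)] using assms(2) by (intro curve_length_on_mono) simp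
  then show ?thesis by simp
qed

lemma arclength_fun_neg: "t < 0 \<Longrightarrow> arclength_fun g t = 0"
  by (simp add: arclength_fun_def curve_length_on_empty)

lemma arclength_fun_add_chain_sum_le:
  assumes "rectifiable g" "0 \<le> c" "c \<le> b" "b \<le> 1" "sorted (c # vs)" "set vs \<subseteq> {..b}"
  shows "arclength_fun g c + chain_sum (\<lambda>s t. dist (g s) (g t)) (c # vs) \<le> arclength_fun g b"
proof -
  let ?E = "\<lambda>s t. dist (g s) (g t)"
  have "curve_length_on dist g 0 c \<le> ereal (arclength_fun g b - chain_sum ?E (c # vs))"
  proof (rule curve_length_on_le)
    fix us assume us: "sorted us" "set us \<subseteq> {0..c}"
    have "chain_sum ?E us + chain_sum ?E (c # vs) \<le> chain_sum ?E (us @ [c]) + chain_sum ?E (c # vs)"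
      by (simp add: chain_sum_le_snoc)
    also have "\<dots> = chain_sum ?E (us @ c # vs)" by (rule chain_sum_append[symmetric])
    also have "ereal \<dots> \<le> curve_length_on dist g 0 b"
      using us assms(2,3,5,6)
      by (intro chain_sum_le_curve_length_on) (force simp: sorted_append subset_iff intro: order_trans)+
    also have "\<dots> = ereal (arclength_fun g b)" using ereal_arclength_fun[OF assms(1), of b] assms(4) by simp
    finally show "chain_sum ?E us \<le> arclength_fun g b - chain_sum ?E (c # vs)" by simp
  qed
  then have "ereal (arclength_fun g c) \<le> ereal (arclength_fun g b - chain_sum ?E (c # vs))"
    using ereal_arclength_fun[OF assms(1), of c] assms(3,4) by simp
  then show ?thesis by simp
qed

lemma obtain_near_point_right:
  fixes g :: "real \<Rightarrow> 'a::metric_space"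
  assumes g: "continuous_on {0..1} g" and at: "0 \<le> a" "a < t" "t \<le> 1" and e: "0 < e"
  obtains c where "a < c" "c < t" "dist (g a) (g c) < e"
proof -
  have "\<forall>e>0. \<exists>d>0. \<forall>c\<in>{0..1}. dist c a < d \<longrightarrow> dist (g c) (g a) < e"
    using g at unfolding continuous_on_iff by simp
  then obtain d where d: "0 < d" "\<And>c. c \<in> {0..1} \<Longrightarrow> dist c a < d \<Longrightarrow> dist (g c) (g a) < e"
    using e by blast
  define c where "c = a + min d (t - a) / 2"
  have "a < c" "c < t" "dist c a < d"
    using d(1) at unfolding c_def dist_real_def by (auto simp: min_def field_simps)
  then show ?thesis using that d(2)[of c] at by (simp add: dist_commute)
qed

(* A partition almost realising the length on [0,b] must gain 3/4 of the jump right after a;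
   moving its point a to a nearby c > a costs at most 1/4 by continuity of g.  Iterating the
   step contradicts finiteness of the length. *)
lemma arclength_fun_jump_step:
  assumes r: "rectifiable g" and ab: "0 \<le> a" "a < b" "b \<le> 1" and \<eta>: "0 < \<eta>"
    and jump: "\<And>b'. a < b' \<Longrightarrow> b' \<le> 1 \<Longrightarrow> arclength_fun g a + \<eta> \<le> arclength_fun g b'"
  obtains c where "a < c" "c \<le> b" "arclength_fun g c + \<eta> / 2 \<le> arclength_fun g b"
proof -
  let ?F = "arclength_fun g" and ?E = "\<lambda>s t. dist (g s) (g t)"
  have "curve_length_on dist g 0 b = ereal (?F b)" using ereal_arclength_fun[OF r, of b] ab by simp
  then obtain ts where ts: "sorted ts" "set ts \<subseteq> {0..b}" "?F b - \<eta> / 4 < chain_sum ?E ts"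
    using \<eta> by (elim curve_length_on_approx[where e = "\<eta> / 4"]) auto
  define ts1 where "ts1 = takeWhile (\<lambda>t. t \<le> a) ts"
  define ts2 where "ts2 = dropWhile (\<lambda>t. t \<le> a) ts"
  have ts_eq: "ts = ts1 @ ts2" unfolding ts1_def ts2_def by simp
  have ts1_le: "\<forall>t\<in>set ts1. t \<le> a" unfolding ts1_def by (auto dest: set_takeWhileD)
  have sorted: "sorted ts1" "sorted ts2" using ts(1) ts_eq sorted_append by metis+
  have "ereal (chain_sum ?E (ts1 @ [a])) \<le> curve_length_on dist g 0 a"
    using sorted ts1_le ts(2) ab(1) ts_eq
    by (intro chain_sum_le_curve_length_on) (auto simp: sorted_append)
  also have "\<dots> = ereal (?F a)" using ereal_arclength_fun[OF r, of a] ab by simp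
  finally have "chain_sum ?E ts \<le> ?F a + chain_sum ?E (a # ts2)"
    using chain_sum_le_insert[of ?E ts1 ts2 a] ts_eq by (simp add: dist_triangle)
  then have after_a: "3 * \<eta> / 4 < chain_sum ?E (a # ts2)"
    using ts(3) jump[OF ab(2,3)] by simp
  then obtain t1 rest where t1: "ts2 = t1 # rest" using \<eta> by (cases ts2) auto
  have "a < t1" using hd_dropWhile[of "\<lambda>t. t \<le> a" ts] t1 unfolding ts2_def by fastforce
  have ts2_le: "set ts2 \<subseteq> {..b}" using ts(2) ts_eq by auto
  then have "t1 \<le> b" using t1 by auto
  have "continuous_on {0..1} g" using r unfolding rectifiable_def path_def by simp
  then obtain c where c: "a < c" "c < t1" "dist (g a) (g c) < \<eta> / 4"
    using ab \<open>a < t1\<close> \<open>t1 \<le> b\<close> \<eta> by (elim obtain_near_point_right[where t = t1 and e = "\<eta> / 4"]) auto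
  then have "\<eta> / 2 < chain_sum ?E (c # ts2)"
    using after_a dist_triangle[of "g a" "g t1" "g c"] t1 by simp
  moreover have "?F c + chain_sum ?E (c # ts2) \<le> ?F b"
    using c ab \<open>t1 \<le> b\<close> sorted(2) t1 ts2_le by (intro arclength_fun_add_chain_sum_le[OF r]) auto
  ultimately show ?thesis using that c \<open>t1 \<le> b\<close> by simp
qed

lemma arclength_fun_small_increment:
  assumes r: "rectifiable g" and a: "0 \<le> a" "a < 1" and \<eta>: "0 < \<eta>"
  shows "\<exists>d>0. arclength_fun g (a + d) - arclength_fun g a < \<eta>"
proof (rule ccontr)
  let ?F = "arclength_fun g"
  assume "\<not> ?thesis"
  then have jump: "?F a + \<eta> \<le> ?F b" if "a < b" "b \<le> 1" for b
    using that by (auto dest!: spec[of _ "b - a"])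
  have grow: "?F a + real n * \<eta> / 2 \<le> ?F b" if "a < b" "b \<le> 1" for n b
    using that
  proof (induction n arbitrary: b)
    case 0
    then show ?case using arclength_fun_mono[OF r] by simp
  next
    case (Suc n)
    obtain c where c: "a < c" "c \<le> b" "?F c + \<eta> / 2 \<le> ?F b"
      using arclength_fun_jump_step[OF r a(1) Suc.prems \<eta> jump] by blast
    then have "?F a + real n * \<eta> / 2 \<le> ?F c" using Suc by simp
    with c show ?case by (simp add: field_simps)
  qed
  obtain n :: nat where "2 * (?F 1 - ?F a) / \<eta> < real n"
    using reals_Archimedean2 by blast
  then have "?F 1 < ?F a + real n * \<eta> / 2" using \<eta> by (simp add: field_simps)
  then show False using grow[of 1 n] a by simp
qed

lemma continuous_at_right_arclength_fun:
  assumes r: "rectifiable g"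
  shows "continuous (at_right a) (arclength_fun g)"
proof (subst continuous_at_right_real_increasing)
  show "\<And>s t. s \<le> t \<Longrightarrow> arclength_fun g s \<le> arclength_fun g t"
    using arclength_fun_mono[OF r] .
  show "\<forall>e>0. \<exists>d>0. arclength_fun g (a + d) - arclength_fun g a < e"
  proof (intro allI impI)
    fix e :: real assume e: "0 < e"
    consider "a < 0" | "0 \<le> a" "a < 1" | "1 \<le> a" by linarith
    then show "\<exists>d>0. arclength_fun g (a + d) - arclength_fun g a < e"
    proof cases
      case 1
      then show ?thesis using e by (intro exI[of _ "- a / 2"]) (simp add: arclength_fun_neg)
    next
      case 2
      then show ?thesis using arclength_fun_small_increment[OF r _ _ e] by blast
    next
      case 3
      then show ?thesis using e by (intro exI[of _ 1]) (simp add: arclength_fun_def)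
    qed
  qed
qed

lemma interval_measure_arclength_fun_Ioc:
  assumes "rectifiable g" "a \<le> b"
  shows "emeasure (interval_measure (arclength_fun g)) {a<..b} = arclength_fun g b - arclength_fun g a"
    and "measure (interval_measure (arclength_fun g)) {a<..b} = arclength_fun g b - arclength_fun g a"
  using emeasure_interval_measure_Ioc measure_interval_measure_Ioc
  by (metis assms(2) arclength_fun_mono[OF assms(1)] continuous_at_right_arclength_fun[OF assms(1)])+

lemma integrable_line_integrand:
  fixes \<rho> :: "'a::metric_space \<Rightarrow> real"
  assumes r: "rectifiable g" and \<rho>: "continuous_on UNIV \<rho>"
  shows "integrable (interval_measure (arclength_fun g)) (\<lambda>t. indicator {0..1} t *\<^sub>R \<rho> (g t))"
proof -
  let ?M = "interval_measure (arclength_fun g)"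
  have "continuous_on {0..1} g" using r unfolding rectifiable_def path_def by simp
  then have cont: "continuous_on {0..1} (\<lambda>t. \<rho> (g t))"
    by (rule continuous_on_compose2[OF \<rho>]) auto
  then have "bounded ((\<lambda>t. \<rho> (g t)) ` {0..1})"
    by (intro compact_imp_bounded compact_continuous_image) auto
  then obtain B where B: "\<And>t. t \<in> {0..1} \<Longrightarrow> \<bar>\<rho> (g t)\<bar> \<le> B"
    unfolding bounded_iff by (auto simp del: atLeastAtMost_iff)
  show ?thesis
  proof (rule Bochner_Integration.integrable_bound)
    show "integrable ?M (\<lambda>t. B * indicator {-1<..1} t)"
      by (intro integrable_mult_right integrable_real_indicator)
        (auto simp: interval_measure_arclength_fun_Ioc[OF r])
    have "(\<lambda>t. indicator {0..1} t *\<^sub>R \<rho> (g t)) \<in> borel_measurable borel"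
      by (intro borel_measurable_continuous_on_indicator cont) auto
    then show "(\<lambda>t. indicator {0..1} t *\<^sub>R \<rho> (g t)) \<in> borel_measurable ?M"
      by simp
    show "AE t in ?M. norm (indicator {0..1} t *\<^sub>R \<rho> (g t)) \<le> norm (B * indicator {-1<..1} t)"
      using B by (intro AE_I2) (force simp: indicator_def)
  qed
qed

lemma line_integral_nonneg: "(\<And>z. 0 \<le> \<rho> z) \<Longrightarrow> 0 \<le> line_integral \<rho> g"
  unfolding line_integral_def set_lebesgue_integral_def
  by (rule Bochner_Integration.integral_nonneg) (simp add: indicator_def)

lemma line_integral_ge_final_segment:
  assumes r: "rectifiable g" and \<rho>: "continuous_on UNIV \<rho>" "\<And>z. 0 \<le> \<rho> z"
    and t0: "0 \<le> t0" "t0 \<le> 1" and c: "0 \<le> c" "\<And>t. t0 < t \<Longrightarrow> t \<le> 1 \<Longrightarrow> c \<le> \<rho> (g t)"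
  shows "c * dist (g t0) (g 1) \<le> line_integral \<rho> g"
proof -
  let ?M = "interval_measure (arclength_fun g)"
  have "arclength_fun g t0 + chain_sum (\<lambda>s t. dist (g s) (g t)) [t0, 1] \<le> arclength_fun g 1"
    using t0 by (intro arclength_fun_add_chain_sum_le[OF r]) auto
  then have "dist (g t0) (g 1) \<le> measure ?M {t0<..1}"
    using interval_measure_arclength_fun_Ioc(2)[OF r t0(2)] by simp
  then have "c * dist (g t0) (g 1) \<le> c * measure ?M {t0<..1}"
    using c(1) by (rule mult_left_mono)
  also have "\<dots> = integral\<^sup>L ?M (\<lambda>t. c * indicator {t0<..1} t)" by simp
  also have "\<dots> \<le> integral\<^sup>L ?M (\<lambda>t. indicator {0..1} t *\<^sub>R \<rho> (g t))"
    using integrable_line_integrand[OF r \<rho>(1)] \<rho>(2) c t0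
    by (intro integral_mono') (auto simp: indicator_def)
  also have "\<dots> = line_integral \<rho> g" unfolding line_integral_def set_lebesgue_integral_def ..
  finally show ?thesis .
qed

lemma obtain_last_exit:
  fixes g :: "real \<Rightarrow> 'a::metric_space"
  assumes g: "continuous_on {0..1} g" and start: "r \<le> dist (g 0) x"
  obtains t0 where "0 \<le> t0" "t0 \<le> 1" "r \<le> dist (g t0) x"
    "\<And>t. t0 < t \<Longrightarrow> t \<le> 1 \<Longrightarrow> dist (g t) x < r"
proof -
  define S where "S = {t \<in> {0..1}. r \<le> dist (g t) x}"
  have "closed S" unfolding S_def
    by (intro continuous_on_closed_Collect_le continuous_on_dist g continuous_on_const) auto
  moreover have "0 \<in> S" using start unfolding S_def by auto
  moreover have bdd: "bdd_above S" unfolding S_def by (auto intro: bdd_aboveI[of _ 1])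
  ultimately have Sup: "Sup S \<in> S" by (intro closed_contains_Sup) auto
  moreover have "dist (g t) x < r" if "Sup S < t" "t \<le> 1" for t
  proof (rule ccontr)
    assume "\<not> ?thesis"
    then have "t \<in> S" using that Sup unfolding S_def by auto
    then show False using cSup_upper[OF _ bdd] that by fastforce
  qed
  ultimately show ?thesis using that unfolding S_def by auto
qed

lemma exp_le_line_integral:
  fixes g :: "real \<Rightarrow> 'a::metric_space"
  assumes r: "rectifiable g" and ends: "pathstart g = u" "pathfinish g = x"
    and far: "1 \<le> dist u x" and \<epsilon>: "0 \<le> \<epsilon>"
  shows "exp (- \<epsilon> * (dist p x + 1)) \<le> line_integral (\<lambda>z. exp (- \<epsilon> * dist p z)) g"
proof -
  have g0: "g 0 = u" and g1: "g 1 = x" using ends unfolding pathstart_def pathfinish_def by auto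
  have "continuous_on {0..1} g" using r unfolding rectifiable_def path_def by simp
  then obtain t0 where t0: "0 \<le> t0" "t0 \<le> 1" "1 \<le> dist (g t0) x"
      and near: "\<And>t. t0 < t \<Longrightarrow> t \<le> 1 \<Longrightarrow> dist (g t) x < 1"
    using far g0 by (elim obtain_last_exit) auto
  have "exp (- \<epsilon> * (dist p x + 1)) \<le> exp (- \<epsilon> * dist p (g t))" if "t0 < t" "t \<le> 1" for t
  proof -
    have "dist p (g t) \<le> dist p x + 1"
      using near[OF that] dist_triangle[of p "g t" x] by (simp add: dist_commute)
    then show ?thesis using \<epsilon> by (simp add: mult_left_mono)
  qed
  then have "exp (- \<epsilon> * (dist p x + 1)) * dist (g t0) (g 1)
      \<le> line_integral (\<lambda>z. exp (- \<epsilon> * dist p z)) g"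
    using t0 by (intro line_integral_ge_final_segment[OF r]) (auto intro!: continuous_intros)
  moreover have "exp (- \<epsilon> * (dist p x + 1)) \<le> exp (- \<epsilon> * (dist p x + 1)) * dist (g t0) (g 1)"
    using t0(3) g1 by simp
  ultimately show ?thesis by linarith
qed

section \<open>Geodesics\<close>

definition geodesic_path :: "(real \<Rightarrow> 'a) \<Rightarrow> 'a::metric_space \<Rightarrow> 'a \<Rightarrow> real \<Rightarrow> 'a" where
  "geodesic_path \<gamma> x y s = \<gamma> (dist x y * s)"

lemma is_geodesic_dist:
  "is_geodesic \<gamma> x y \<Longrightarrow> s \<in> {0..dist x y} \<Longrightarrow> t \<in> {0..dist x y} \<Longrightarrow>
     dist (\<gamma> s) (\<gamma> t) = \<bar>s - t\<bar>"
  unfolding is_geodesic_def by blast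

lemma continuous_on_geodesic:
  assumes "is_geodesic \<gamma> x y"
  shows "continuous_on {0..dist x y} \<gamma>"
  unfolding continuous_on_iff
  using is_geodesic_dist[OF assms] by (metis dist_real_def)

lemma pathstart_geodesic_path: "is_geodesic \<gamma> x y \<Longrightarrow> pathstart (geodesic_path \<gamma> x y) = x"
  and pathfinish_geodesic_path: "is_geodesic \<gamma> x y \<Longrightarrow> pathfinish (geodesic_path \<gamma> x y) = y"
  unfolding is_geodesic_def pathstart_def pathfinish_def geodesic_path_def by auto

lemma path_geodesic_path:
  assumes "is_geodesic \<gamma> x y"
  shows "path (geodesic_path \<gamma> x y)"
  unfolding path_def geodesic_path_def
  by (rule continuous_on_compose2[OF continuous_on_geodesic[OF assms]])
    (auto intro!: continuous_intros simp: mult_left_le)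

lemma chain_sum_geodesic_path:
  assumes geo: "is_geodesic \<gamma> x y" and "sorted ts" "set ts \<subseteq> {0..1}"
  shows "chain_sum (\<lambda>s t. dist (geodesic_path \<gamma> x y s) (geodesic_path \<gamma> x y t)) ts
          = (if ts = [] then 0 else dist x y * (last ts - hd ts))"
  using assms(2,3)
proof (induction ts rule: induct_list012)
  case (3 a b zs)
  let ?L = "dist x y"
  have ab: "a \<le> b" "a \<in> {0..1}" "b \<in> {0..1}" using 3(3,4) by auto
  then have "?L * a \<in> {0..?L}" "?L * b \<in> {0..?L}" by (auto simp: mult_left_le)
  then have "dist (\<gamma> (?L * a)) (\<gamma> (?L * b)) = \<bar>?L * a - ?L * b\<bar>"
    by (intro is_geodesic_dist[OF geo])
  also have "\<dots> = ?L * (b - a)"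
    using mult_left_mono[OF ab(1), of ?L] by (simp add: right_diff_distrib)
  finally show ?case using 3 by (simp add: geodesic_path_def right_diff_distrib)
qed auto

lemma curve_length_on_geodesic_path:
  assumes geo: "is_geodesic \<gamma> x y" and t: "0 \<le> t" "t \<le> 1"
  shows "curve_length_on dist (geodesic_path \<gamma> x y) 0 t = ereal (dist x y * t)"
proof (rule antisym)
  show "curve_length_on dist (geodesic_path \<gamma> x y) 0 t \<le> ereal (dist x y * t)"
  proof (rule curve_length_on_le)
    fix ts :: "real list" assume ts: "sorted ts" "set ts \<subseteq> {0..t}"
    have "last ts - hd ts \<le> t" if "ts \<noteq> []"
    proof -
      have "last ts \<in> {0..t}" "hd ts \<in> {0..t}"
        using ts(2) last_in_set[OF that] hd_in_set[OF that] by auto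
      then show ?thesis by simp
    qed
    moreover have "set ts \<subseteq> {0..1}" using ts(2) t by auto
    ultimately show "chain_sum (\<lambda>s u. dist (geodesic_path \<gamma> x y s) (geodesic_path \<gamma> x y u)) ts \<le> dist x y * t"
      using chain_sum_geodesic_path[OF geo ts(1)] t by (simp add: mult_left_mono)
  qed
  show "ereal (dist x y * t) \<le> curve_length_on dist (geodesic_path \<gamma> x y) 0 t"
    using chain_sum_le_curve_length_on[of "[0, t]" 0 t dist "geodesic_path \<gamma> x y"]
      chain_sum_geodesic_path[OF geo, of "[0, t]"] t by simp
qed

lemma rectifiable_geodesic_path: "is_geodesic \<gamma> x y \<Longrightarrow> rectifiable (geodesic_path \<gamma> x y)"
  unfolding rectifiable_def using path_geodesic_path curve_length_on_geodesic_path[of \<gamma> x y 1] by simp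

lemma arclength_fun_geodesic_path:
  assumes "is_geodesic \<gamma> x y"
  shows "arclength_fun (geodesic_path \<gamma> x y) = (\<lambda>t. dist x y * max 0 (min 1 t))"
proof
  fix t :: real
  show "arclength_fun (geodesic_path \<gamma> x y) t = dist x y * max 0 (min 1 t)"
  proof (cases "t < 0")
    case False
    then show ?thesis
      using curve_length_on_geodesic_path[OF assms, of "min 1 t"] by (simp add: arclength_fun_def)
  qed (simp add: arclength_fun_neg)
qed

lemma emeasure_interval_measure_Ioi:
  fixes F :: "real \<Rightarrow> real"
  assumes mono: "\<And>x y. x \<le> y \<Longrightarrow> F x \<le> F y" and right_cont: "\<And>a. continuous (at_right a) F"
    and lim: "(F \<longlongrightarrow> c) at_top"
  shows "emeasure (interval_measure F) {x<..} = ennreal (c - F x)"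
proof -
  let ?M = "interval_measure F"
  have "(\<lambda>n. emeasure ?M {x<..x + real n}) \<longlonglongrightarrow> emeasure ?M (\<Union>n. {x<..x + real n})"
    by (intro Lim_emeasure_incseq) (auto simp: incseq_def)
  also have "(\<Union>n. {x<..x + real n}) = {x<..}"
  proof (intro equalityI subsetI)
    fix t assume "t \<in> {x<..}"
    moreover obtain n :: nat where "t - x < real n" using reals_Archimedean2 by blast
    ultimately have "t \<in> {x<..x + real n}" by simp
    then show "t \<in> (\<Union>n. {x<..x + real n})" by blast
  qed auto
  finally have "(\<lambda>n. ennreal (F (x + real n) - F x)) \<longlonglongrightarrow> emeasure ?M {x<..}"
    using emeasure_interval_measure_Ioc[OF _ mono right_cont] by simp
  moreover have "filterlim (\<lambda>n. x + real n) at_top sequentially"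
    by (rule filterlim_tendsto_add_at_top[OF tendsto_const filterlim_real_sequentially])
  then have "(\<lambda>n. ennreal (F (x + real n) - F x)) \<longlonglongrightarrow> ennreal (c - F x)"
    by (intro tendsto_ennrealI tendsto_diff tendsto_const filterlim_compose[OF lim])
  ultimately show ?thesis by (rule LIMSEQ_unique)
qed

lemma emeasure_distr_divide_Ioi:
  fixes L x :: real
  assumes L: "0 \<le> L"
  shows "emeasure (distr (restrict_space lborel {0..L}) borel (\<lambda>s. s / L)) {x<..}
           = ennreal (L - L * max 0 (min 1 x))"
proof -
  have "emeasure (distr (restrict_space lborel {0..L}) borel (\<lambda>s. s / L)) {x<..}
      = emeasure lborel ({0..L} \<inter> {s. x < s / L})"
    by (subst emeasure_distr) (auto intro: measurable_restrict_space1 simp: emeasure_restrict_space Int_commute vimage_def)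
  also have "\<dots> = ennreal (L - L * max 0 (min 1 x))"
  proof (cases "L = 0")
    case True
    then have "emeasure lborel ({0..L} \<inter> {s. x < s / L}) \<le> emeasure lborel {0..0::real}"
      by (intro emeasure_mono) auto
    then show ?thesis using True by simp
  next
    case False
    then have L: "0 < L" using L by simp
    then have preimage: "{0..L} \<inter> {s. x < s / L} = {0..L} \<inter> {L * x<..}"
      by (auto simp: less_divide_eq mult.commute)
    consider "x < 0" | "0 \<le> x" "x \<le> 1" | "1 < x" by linarith
    then show ?thesis
    proof cases
      case 1
      then have "{0..L} \<inter> {L * x<..} = {0..L}"
        using L by (auto intro: order.strict_trans2[OF mult_pos_neg[OF L]])
      then show ?thesis using preimage 1 L by simp
    next
      case 2
      then have "{0..L} \<inter> {L * x<..} = {L * x<..L}"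
      proof -
        have "0 \<le> L * x" using L 2 by simp
        then show ?thesis using L by auto
      qed
      then show ?thesis using preimage 2 L by (simp add: mult_left_le right_diff_distrib)
    next
      case 3
      then have "L < L * x" using L by simp
      then have "{0..L} \<inter> {L * x<..} = {}" by auto
      then show ?thesis using preimage 3 by simp
    qed
  qed
  finally show ?thesis .
qed

lemma interval_measure_clamp_eq_distr:
  fixes L :: real
  assumes L: "0 \<le> L"
  shows "interval_measure (\<lambda>t. L * max 0 (min 1 t)) = distr (restrict_space lborel {0..L}) borel (\<lambda>s. s / L)"
proof (rule measure_eqI_lessThan)
  have "continuous_on UNIV (\<lambda>t::real. L * max 0 (min 1 t))"
    by (intro continuous_intros)
  then have right_cont: "continuous (at_right a) (\<lambda>t::real. L * max 0 (min 1 t))" for a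
    by (simp add: continuous_on_eq_continuous_within continuous_at_imp_continuous_at_within)
  have "((\<lambda>t::real. L * max 0 (min 1 t)) \<longlongrightarrow> L) at_top"
    by (intro tendsto_eventually eventually_at_top_linorderI[of 1]) simp
  then have "emeasure (interval_measure (\<lambda>t. L * max 0 (min 1 t))) {x<..} = ennreal (L - L * max 0 (min 1 x))" for x
    using L by (intro emeasure_interval_measure_Ioi right_cont mult_left_mono) auto
  then show "emeasure (interval_measure (\<lambda>t. L * max 0 (min 1 t))) {x<..}
      = emeasure (distr (restrict_space lborel {0..L}) borel (\<lambda>s. s / L)) {x<..}"
    and "emeasure (interval_measure (\<lambda>t. L * max 0 (min 1 t))) {x<..} < \<infinity>" for x
    using emeasure_distr_divide_Ioi[OF L] by simp_all
qed simp_all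

(* For dist x y = 0 the substitution s / dist x y degenerates to 0, which is harmless because
   the domain of integration is then {0}. *)
lemma line_integral_geodesic_path:
  fixes \<rho> :: "'a::metric_space \<Rightarrow> real"
  assumes geo: "is_geodesic \<gamma> x y" and \<rho>: "continuous_on UNIV \<rho>"
  shows "line_integral \<rho> (geodesic_path \<gamma> x y) = (LBINT s:{0..dist x y}. \<rho> (\<gamma> s))"
proof -
  let ?L = "dist x y" and ?g = "geodesic_path \<gamma> x y"
  have "continuous_on {0..1} (\<lambda>t. \<rho> (?g t))"
    using path_geodesic_path[OF geo] unfolding path_def by (rule continuous_on_compose2[OF \<rho>]) auto
  then have "(\<lambda>t. indicator {0..1} t *\<^sub>R \<rho> (?g t)) \<in> borel_measurable borel"
    by (intro borel_measurable_continuous_on_indicator) auto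
  then have "line_integral \<rho> ?g
      = integral\<^sup>L (restrict_space lborel {0..?L}) (\<lambda>s. indicator {0..1} (s / ?L) *\<^sub>R \<rho> (?g (s / ?L)))"
    unfolding line_integral_def set_lebesgue_integral_def arclength_fun_geodesic_path[OF geo]
      interval_measure_clamp_eq_distr[OF zero_le_dist]
    by (intro integral_distr measurable_restrict_space1) auto
  also have "\<dots> = integral\<^sup>L lborel
      (\<lambda>s. indicator {0..?L} s *\<^sub>R (indicator {0..1} (s / ?L) *\<^sub>R \<rho> (?g (s / ?L))))"
    by (rule integral_restrict_space) auto
  also have "\<dots> = (LBINT s:{0..?L}. \<rho> (\<gamma> s))"
    unfolding set_lebesgue_integral_def
    by (intro Bochner_Integration.integral_cong) (auto simp: indicator_def geodesic_path_def)
  finally show ?thesis .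
qed

lemma exp_neg_abs_le_sech:
  fixes \<epsilon> w :: real
  assumes "0 \<le> \<epsilon>"
  shows "exp (- \<epsilon> * \<bar>w\<bar>) \<le> 2 * exp (\<epsilon> * w) / (1 + (exp (\<epsilon> * w))\<^sup>2)"
proof -
  define E where "E = exp (\<epsilon> * w)"
  have E: "0 < E" "0 < 1 + E\<^sup>2" unfolding E_def by (simp_all add: add_pos_nonneg)
  show ?thesis
  proof (cases "0 \<le> w")
    case True
    then have "1 \<le> E" unfolding E_def using assms by simp
    then have "inverse E \<le> 2 * E / (1 + E\<^sup>2)"
      using E one_le_power[of E 2] by (simp add: field_simps power2_eq_square)
    then show ?thesis using True unfolding E_def by (simp add: exp_minus)
  next
    case False
    then have "E \<le> 1" unfolding E_def using assms by (simp add: mult_nonneg_nonpos)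
    then have "E \<le> 2 * E / (1 + E\<^sup>2)"
      using E power_le_one[of E 2] by (simp add: field_simps)
    then show ?thesis using False unfolding E_def by simp
  qed
qed

(* The majorant 2 e^w / (1 + e^(2w)) of e^(-|w|) has the primitive 2 arctan e^w, so the integral
   is bounded without splitting it at the kink c. *)
lemma set_integral_exp_neg_abs_le:
  fixes \<epsilon> c L :: real
  assumes \<epsilon>: "0 < \<epsilon>" and L: "0 \<le> L"
  shows "(LBINT s:{0..L}. exp (- \<epsilon> * \<bar>s - c\<bar>)) \<le> pi / \<epsilon>"
proof -
  define h where "h s = 2 * exp (\<epsilon> * (s - c)) / (1 + (exp (\<epsilon> * (s - c)))\<^sup>2)" for s
  define G where "G s = 2 * arctan (exp (\<epsilon> * (s - c))) / \<epsilon>" for s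
  have den: "1 + (exp (\<epsilon> * (s - c)))\<^sup>2 \<noteq> 0" for s
    by (metis add_pos_nonneg zero_le_power2 zero_less_one less_irrefl)
  have h_cont: "continuous_on S h" for S
    unfolding h_def using den by (intro continuous_intros) auto
  have "\<epsilon> * \<epsilon> + \<epsilon> * (\<epsilon> * (exp t)\<^sup>2) \<noteq> 0" for t
    using \<epsilon> by (metis add_pos_nonneg mult_pos_pos mult_nonneg_nonneg zero_le_power2 less_imp_le less_irrefl)
  then have G_deriv: "(G has_real_derivative h s) (at s within S)" for s S
    unfolding G_def h_def using \<epsilon> den[of s] by (auto intro!: derivative_eq_intros simp: field_simps)
  have "(LBINT s:{0..L}. exp (- \<epsilon> * \<bar>s - c\<bar>)) \<le> (LBINT s:{0..L}. h s)"
    using \<epsilon> exp_neg_abs_le_sech[of \<epsilon>]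
    by (intro set_integral_mono borel_integrable_atLeastAtMost' h_cont continuous_intros)
      (auto simp: h_def)
  also have "\<dots> = G L - G 0"
    using L h_cont G_deriv
    by (simp add: interval_integral_Icc[symmetric] interval_integral_FTC_finite
        has_real_derivative_iff_has_vector_derivative[symmetric])
  also have "\<dots> \<le> pi / \<epsilon>"
  proof -
    have "arctan (exp (\<epsilon> * (L - c))) < pi / 2" by (rule arctan_ubound)
    moreover have "0 < arctan (exp (\<epsilon> * (0 - c)))" by simp
    ultimately have "2 * arctan (exp (\<epsilon> * (L - c))) - 2 * arctan (exp (\<epsilon> * (0 - c))) \<le> pi"
      by linarith
    then show ?thesis unfolding G_def using \<epsilon> by (simp add: diff_divide_distrib[symmetric] divide_right_mono)
  qed
  finally show ?thesis .
qed

lemma gromov_product_le_dist_geodesic: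
  assumes geo: "is_geodesic \<gamma> x y" and s: "0 \<le> s" "s \<le> dist x y"
  shows "gromov_product p x y + \<bar>s - (dist p x - dist p y + dist x y) / 2\<bar> \<le> dist p (\<gamma> s)"
proof -
  have "dist x (\<gamma> s) = s" "dist (\<gamma> s) y = dist x y - s"
    using is_geodesic_dist[OF geo, of 0 s] is_geodesic_dist[OF geo, of s "dist x y"] s geo
    unfolding is_geodesic_def by auto
  then have "dist p x - s \<le> dist p (\<gamma> s)" "dist p y - (dist x y - s) \<le> dist p (\<gamma> s)"
    using dist_triangle[of p x "\<gamma> s"] dist_triangle[of p y "\<gamma> s"] by (simp_all add: dist_commute)
  then show ?thesis unfolding gromov_product_def by (auto simp: abs_if field_simps)
qed

lemma set_integral_geodesic_le:
  fixes \<gamma> :: "real \<Rightarrow> 'a::metric_space"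
  assumes geo: "is_geodesic \<gamma> x y" and \<epsilon>: "0 < \<epsilon>"
  shows "(LBINT s:{0..dist x y}. exp (- \<epsilon> * dist p (\<gamma> s)))
           \<le> exp (- \<epsilon> * gromov_product p x y) * (pi / \<epsilon>)"
proof -
  let ?c = "(dist p x - dist p y + dist x y) / 2" and ?K = "exp (- \<epsilon> * gromov_product p x y)"
  have "exp (- \<epsilon> * dist p (\<gamma> s)) \<le> ?K * exp (- \<epsilon> * \<bar>s - ?c\<bar>)" if "s \<in> {0..dist x y}" for s
    using mult_left_mono[OF gromov_product_le_dist_geodesic[OF geo, of s p], of \<epsilon>] that \<epsilon>
    by (simp add: exp_add[symmetric] algebra_simps)
  then have "(LBINT s:{0..dist x y}. exp (- \<epsilon> * dist p (\<gamma> s)))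
      \<le> (LBINT s:{0..dist x y}. ?K * exp (- \<epsilon> * \<bar>s - ?c\<bar>))"
    using continuous_on_geodesic[OF geo]
    by (intro set_integral_mono borel_integrable_atLeastAtMost')
      (auto intro!: continuous_intros continuous_on_compose2[of UNIV "\<lambda>z. dist p z"])
  also have "\<dots> = ?K * (LBINT s:{0..dist x y}. exp (- \<epsilon> * \<bar>s - ?c\<bar>))" by simp
  also have "\<dots> \<le> ?K * (pi / \<epsilon>)"
    by (intro mult_left_mono set_integral_exp_neg_abs_le[OF \<epsilon> zero_le_dist]) simp
  finally show ?thesis .
qed

section \<open>The uniformized distance along Gromov sequences\<close>

lemma gromov_product_self [simp]: "gromov_product p x x = dist p x"
  unfolding gromov_product_def by simp

lemma uniformized_le_exp_gromov_product:
  fixes x y :: "'a::metric_space"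
  assumes geo: "is_geodesic \<gamma> x y" and \<epsilon>: "0 < \<epsilon>"
  shows "uniformized \<epsilon> p x y \<le> exp (- \<epsilon> * gromov_product p x y) * (pi / \<epsilon>)"
proof -
  let ?\<rho> = "\<lambda>z. exp (- \<epsilon> * dist p z)"
  have "uniformized \<epsilon> p x y \<le> line_integral ?\<rho> (geodesic_path \<gamma> x y)"
    unfolding uniformized_def using geo
    by (intro cINF_lower bdd_belowI2[where m = 0] line_integral_nonneg)
      (auto simp: rectifiable_geodesic_path pathstart_geodesic_path pathfinish_geodesic_path)
  also have "\<dots> = (LBINT s:{0..dist x y}. ?\<rho> (\<gamma> s))"
    by (intro line_integral_geodesic_path[OF geo] continuous_intros)
  also have "\<dots> \<le> exp (- \<epsilon> * gromov_product p x y) * (pi / \<epsilon>)"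
    by (rule set_integral_geodesic_le[OF geo \<epsilon>])
  finally show ?thesis .
qed

lemma exp_le_uniformized:
  fixes u x :: "'a::metric_space"
  assumes geodesic: "geodesic_space TYPE('a)" and \<epsilon>: "0 \<le> \<epsilon>" and far: "1 \<le> dist u x"
  shows "exp (- \<epsilon> * (dist p x + 1)) \<le> uniformized \<epsilon> p u x"
  unfolding uniformized_def
proof (rule cINF_greatest)
  obtain \<gamma> where "is_geodesic \<gamma> u x" using geodesic unfolding geodesic_space_def by blast
  then show "{g. rectifiable g \<and> pathstart g = u \<and> pathfinish g = x} \<noteq> {}"
    using rectifiable_geodesic_path pathstart_geodesic_path pathfinish_geodesic_path by blast
qed (use exp_le_line_integral far \<epsilon> in blast)

lemma gromov_sequence_uniformized_Cauchy:
  fixes xs :: "nat \<Rightarrow> 'a::metric_space"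
  assumes geodesic: "geodesic_space TYPE('a)" and \<epsilon>: "0 < \<epsilon>"
    and gromov: "gromov_sequence p xs" and e: "0 < e"
  shows "\<exists>N. \<forall>n\<ge>N. \<forall>m\<ge>N. uniformized \<epsilon> p (xs n) (xs m) < e"
proof -
  define M where "M = ln (pi / (\<epsilon> * e)) / \<epsilon>"
  have "exp (- \<epsilon> * M) * (pi / \<epsilon>) = e"
    using \<epsilon> e by (simp add: M_def exp_minus)
  moreover have "exp (- \<epsilon> * (M + 1)) < exp (- \<epsilon> * M)" using \<epsilon> by simp
  ultimately have M: "exp (- \<epsilon> * (M + 1)) * (pi / \<epsilon>) < e"
    using \<epsilon> by (metis mult_strict_right_mono divide_pos_pos pi_gt_zero)
  obtain N where N: "\<forall>n\<ge>N. \<forall>m\<ge>N. M + 1 \<le> gromov_product p (xs n) (xs m)"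
    using gromov unfolding gromov_sequence_def by blast
  have "uniformized \<epsilon> p (xs n) (xs m) < e" if "N \<le> n" "N \<le> m" for n m
  proof -
    obtain \<gamma> where geo: "is_geodesic \<gamma> (xs n) (xs m)"
      using geodesic unfolding geodesic_space_def by blast
    have "uniformized \<epsilon> p (xs n) (xs m) \<le> exp (- \<epsilon> * gromov_product p (xs n) (xs m)) * (pi / \<epsilon>)"
      by (rule uniformized_le_exp_gromov_product[OF geo \<epsilon>])
    also have "\<dots> \<le> exp (- \<epsilon> * (M + 1)) * (pi / \<epsilon>)"
      using N that \<epsilon> by (intro mult_right_mono) auto
    finally show ?thesis using M by linarith
  qed
  then show ?thesis by blast
qed

lemma gromov_sequence_no_uniformized_limit:
  fixes xs :: "nat \<Rightarrow> 'a::metric_space"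
  assumes geodesic: "geodesic_space TYPE('a)" and \<epsilon>: "0 \<le> \<epsilon>" and gromov: "gromov_sequence p xs"
  shows "\<not> (\<lambda>n. uniformized \<epsilon> p (xs n) x) \<longlonglongrightarrow> 0"
proof
  assume "(\<lambda>n. uniformized \<epsilon> p (xs n) x) \<longlonglongrightarrow> 0"
  then have "eventually (\<lambda>n. uniformized \<epsilon> p (xs n) x < exp (- \<epsilon> * (dist p x + 1))) sequentially"
    by (rule order_tendstoD) simp
  moreover obtain N where "\<forall>n\<ge>N. \<forall>m\<ge>N. dist p x + 1 \<le> gromov_product p (xs n) (xs m)"
    using gromov unfolding gromov_sequence_def by blast
  then have "\<forall>n\<ge>N. dist p x + 1 \<le> dist p (xs n)"
    by (metis gromov_product_self order_refl)
  then have "eventually (\<lambda>n. dist p x + 1 \<le> dist p (xs n)) sequentially"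
    unfolding eventually_sequentially by blast
  ultimately obtain n where "uniformized \<epsilon> p (xs n) x < exp (- \<epsilon> * (dist p x + 1))"
      and "dist p x + 1 \<le> dist p (xs n)"
    using eventually_happens'[OF sequentially_bot] eventually_conj by blast
  moreover from this(2) have "1 \<le> dist (xs n) x"
    using dist_triangle[of p "xs n" x] by (simp add: dist_commute)
  then have "exp (- \<epsilon> * (dist p x + 1)) \<le> uniformized \<epsilon> p (xs n) x"
    by (rule exp_le_uniformized[OF geodesic \<epsilon>])
  ultimately show False by simp
qed

lemma gromov_sequence_converges_to_metric_boundary:
  fixes xs :: "nat \<Rightarrow> 'a::metric_space"
  assumes "geodesic_space TYPE('a)" and "0 < \<epsilon>" and "gromov_sequence p xs"
  shows "converges_to_metric_boundary \<epsilon> p xs"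
  unfolding converges_to_metric_boundary_def
  using gromov_sequence_uniformized_Cauchy[OF assms]
    gromov_sequence_no_uniformized_limit[OF assms(1) _ assms(3)] assms(2)
  by auto

theorem lemma3p1:
  fixes \<delta> \<epsilon> :: real and p :: "'a::metric_space"
  assumes "gromov_hyperbolic TYPE('a) \<delta>"
    and "\<epsilon> > 0"
    and "GH_metric_boundary \<epsilon> p"
  shows "GH_gromov_sequences \<epsilon> p"
proof -
  have "geodesic_space TYPE('a)" using assms(1) unfolding gromov_hyperbolic_def by blast
  then show ?thesis
    using assms(2,3) gromov_sequence_converges_to_metric_boundary
    unfolding GH_gromov_sequences_def GH_metric_boundary_def by blast
qed

end
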